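(* Let $G=(V,E)$ be a finite simple undirected graph with zipper constraint collection $\mathcal{Z}$, let $D\subseteq Z^2$, and let $\mathbb{S}$ be a downstream-enabled prescription on $D$. Then the boundary inclusion $\bar{\mathbb{S}}$, regarded as a prescription on the domain $\bar D$, is downstream enabled.
   Context: A zipper constraint collection is a finite set $\mathcal{Z}=\{(U_1,W_1,y_1),\dots,(U_m,W_m,y_m)\}$, where each $U_i,W_i\in E$ is an edge of $G$ and each $y_i$ is a label. Let $Z^2=\{U_1,\dots,U_m,W_1,\dots,W_m\}$. Write $P\uparrow Q$ if $(P,Q,y)\in\mathcal{Z}$ for some $y$, and let $\rightsquigarrow$ be the transitive closure of $\uparrow$ on $Z^2$. A prescription on a domain $D\subseteq Z^2$ is a subset $\mathbb{S}\subseteq D$. It is downstream enabled if, whenever $P_a\in\mathbb{S}$ and $P_a\rightsquigarrow P_b$, we have $P_b\in\mathbb{S}$ or $P_b\notin D$. The boundary inclusion is defined as follows. Let $F^{\mathrm{off}}=\{P_a\in Z^2\setminus D:\exists P_b\in D\setminus\mathbb{S},\ P_a\rightsquigarrow P_b\}$ and $F^{\mathrm{on}}=\{P_c\in Z^2\setminus D:\exists P_d\in\mathbb{S},\ P_d\rightsquigarrow P_c\}$. Then $\bar D=D\cup F^{\mathrm{off}}\cup F^{\mathrm{on}}$ and $\bar{\mathbb{S}}=\mathbb{S}\cup F^{\mathrm{on}}$, which is a prescription on $\bar D$ whose off pairs are $\bar D\setminus\bar{\mathbb{S}}$. *)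

theory Defs
  imports Main
begin

definition simple_graph :: "'v set \<Rightarrow> 'v set set \<Rightarrow> bool" where
  "simple_graph V E \<longleftrightarrow> finite V \<and> (\<forall>e\<in>E. e \<subseteq> V \<and> card e = 2)"

definition zipper_collection :: "'v set set \<Rightarrow> ('v set \<times> 'v set \<times> 'l) set \<Rightarrow> bool" where
  "zipper_collection E Z \<longleftrightarrow> finite Z \<and> (\<forall>(U,W,y)\<in>Z. U \<in> E \<and> W \<in> E)"

definition Z2 :: "('e \<times> 'e \<times> 'l) set \<Rightarrow> 'e set" where
  "Z2 Z = {U. \<exists>W y. (U,W,y) \<in> Z} \<union> {W. \<exists>U y. (U,W,y) \<in> Z}"

definition up_rel :: "('e \<times> 'e \<times> 'l) set \<Rightarrow> ('e \<times> 'e) set" where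
  "up_rel Z = {(P,Q). \<exists>y. (P,Q,y) \<in> Z}"

definition reach :: "('e \<times> 'e \<times> 'l) set \<Rightarrow> 'e \<Rightarrow> 'e \<Rightarrow> bool" where
  "reach Z P Q \<longleftrightarrow> (P,Q) \<in> (up_rel Z)\<^sup>+"

definition prescription :: "('e \<times> 'e \<times> 'l) set \<Rightarrow> 'e set \<Rightarrow> 'e set \<Rightarrow> bool" where
  "prescription Z D S \<longleftrightarrow> D \<subseteq> Z2 Z \<and> S \<subseteq> D"

definition downstream_enabled :: "('e \<times> 'e \<times> 'l) set \<Rightarrow> 'e set \<Rightarrow> 'e set \<Rightarrow> bool" where
  "downstream_enabled Z D S \<longleftrightarrow>
     (\<forall>Pa Pb. Pa \<in> S \<and> reach Z Pa Pb \<longrightarrow> Pb \<in> S \<or> Pb \<notin> D)"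

definition F_off :: "('e \<times> 'e \<times> 'l) set \<Rightarrow> 'e set \<Rightarrow> 'e set \<Rightarrow> 'e set" where
  "F_off Z D S = {Pa \<in> Z2 Z - D. \<exists>Pb \<in> D - S. reach Z Pa Pb}"

definition F_on :: "('e \<times> 'e \<times> 'l) set \<Rightarrow> 'e set \<Rightarrow> 'e set \<Rightarrow> 'e set" where
  "F_on Z D S = {Pc \<in> Z2 Z - D. \<exists>Pd \<in> S. reach Z Pd Pc}"

definition bdry_domain :: "('e \<times> 'e \<times> 'l) set \<Rightarrow> 'e set \<Rightarrow> 'e set \<Rightarrow> 'e set" where
  "bdry_domain Z D S = D \<union> F_off Z D S \<union> F_on Z D S"

definition bdry_presc :: "('e \<times> 'e \<times> 'l) set \<Rightarrow> 'e set \<Rightarrow> 'e set \<Rightarrow> 'e set" where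
  "bdry_presc Z D S = S \<union> F_on Z D S"

end

theory Submission
  imports Defs
begin

text \<open>Every pair reachable from the boundary inclusion of \<open>S\<close> is already reachable
  from \<open>S\<close> itself, and every pair reachable from \<open>S\<close> lies in \<open>S\<close> (downstream
  enabledness) or outside \<open>D\<close>, hence in \<open>F_on\<close>. So the boundary inclusion is closed
  under \<open>reach\<close> outright.\<close>

lemma reach_in_Z2: "reach Z P Q \<Longrightarrow> Q \<in> Z2 Z"
  unfolding reach_def
  by (induction rule: trancl.induct) (auto simp: up_rel_def Z2_def)

lemma reach_trans: "reach Z P Q \<Longrightarrow> reach Z Q R \<Longrightarrow> reach Z P R"
  unfolding reach_def by (rule trancl_trans)

lemma prescription_bdry:
  assumes "prescription Z D S"
  shows "prescription Z (bdry_domain Z D S) (bdry_presc Z D S)"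
proof -
  have "F_off Z D S \<subseteq> Z2 Z" "F_on Z D S \<subseteq> Z2 Z"
    unfolding F_off_def F_on_def by auto
  with assms show ?thesis
    unfolding prescription_def bdry_domain_def bdry_presc_def by blast
qed

lemma reach_from_bdry_presc:
  assumes "Pa \<in> bdry_presc Z D S" and "reach Z Pa Pb"
  obtains Pd where "Pd \<in> S" and "reach Z Pd Pb"
  using assms reach_trans[of Z _ Pa Pb] that unfolding bdry_presc_def F_on_def by blast

lemma reach_from_presc_in_bdry_presc:
  assumes "downstream_enabled Z D S" and "Pd \<in> S" and "reach Z Pd Pb"
  shows "Pb \<in> bdry_presc Z D S"
proof (cases "Pb \<in> D")
  case True
  with assms show ?thesis unfolding downstream_enabled_def bdry_presc_def by blast
next
  case False
  with assms reach_in_Z2[OF assms(3)] show ?thesis unfolding bdry_presc_def F_on_def by blast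
qed

lemma bdry_presc_reach_closed:
  assumes "downstream_enabled Z D S" and "Pa \<in> bdry_presc Z D S" and "reach Z Pa Pb"
  shows "Pb \<in> bdry_presc Z D S"
proof -
  obtain Pd where "Pd \<in> S" "reach Z Pd Pb"
    using assms(2,3) by (rule reach_from_bdry_presc)
  with assms(1) show ?thesis by (rule reach_from_presc_in_bdry_presc)
qed

lemma downstream_enabled_bdry:
  assumes "downstream_enabled Z D S"
  shows "downstream_enabled Z (bdry_domain Z D S) (bdry_presc Z D S)"
  using bdry_presc_reach_closed[OF assms] unfolding downstream_enabled_def by blast

theorem mainTheorem7:
  fixes V :: "'v set" and E :: "'v set set" and Z :: "('v set \<times> 'v set \<times> 'l) set"
    and D S :: "'v set set"
  assumes "simple_graph V E"
    and "zipper_collection E Z"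
    and "D \<subseteq> Z2 Z"
    and "prescription Z D S"
    and "downstream_enabled Z D S"
  shows "prescription Z (bdry_domain Z D S) (bdry_presc Z D S)
         \<and> downstream_enabled Z (bdry_domain Z D S) (bdry_presc Z D S)"
  using prescription_bdry[OF assms(4)] downstream_enabled_bdry[OF assms(5)] ..

end
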